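(* Consider the discrete-time system with sensor and actuator attacks described in the context. Let $q$ be the largest integer such that for every $J_s\subset\{1,\ldots,n_y\}$ with $\card(J_s)\ge n_y-2q>0$ a complete UIO for $J_s$ exists, and suppose the set of attacked sensors satisfies $\card(W_y)\le q<\frac{n_y}{2}$ (the actuator attack $a_u$ is arbitrary; all actuators may be attacked). Run a complete UIO $\hat x_{J_s}$ for each $J_s\subset\{1,\dots,n_y\}$ with $\card(J_s)=n_y-q$ and a complete UIO $\hat x_{S_s}$ for each $S_s\subset\{1,\dots,n_y\}$ with $\card(S_s)=n_y-2q$. For each $k\ge0$ and each $J_s$ with $\card(J_s)=n_y-q$ define $$\pi_{J_s}(k)=\max_{S_s\subset J_s,\ \card(S_s)=n_y-2q}|\hat x_{J_s}(k)-\hat x_{S_s}(k)|,$$ let $\sigma_s(k)$ be a minimizer of $\pi_{J_s}(k)$ over all $J_s\subset\{1,\dots,n_y\}$ with $\card(J_s)=n_y-q$, and set $\hat x(k)=\hat x_{\sigma_s(k)}(k)$. Define $e(k)=\hat x_{\sigma_s(k)}(k)-x(k)$. Then there exists a class-$\mathcal{KL}$ function $\bar\beta$ such that $$|e(k)|\le\bar\beta(e_0,k)\quad\text{for all }k\ge0,\qquad e_0:=\max_{J_s:\card(J_s)=n_y-q,\ S_s:\card(S_s)=n_y-2q}\{|e_{J_s}(0)|,|e_{S_s}(0)|\},$$ where $e_{J_s}=\hat x_{J_s}-x$ and $e_{S_s}=\hat x_{S_s}-x$.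
   Context: System: $x(k+1)=f(x(k))+B(u(k)+a_u(k))$, $y(k)=h(x(k))+a_y(k)$, $k\in\mathbb{N}$, with state $x\in\mathbb{R}^n$, known input $u\in\mathbb{R}^{n_u}$, actuator attack $a_u\in\mathbb{R}^{n_u}$, output $y\in\mathbb{R}^{n_y}$, sensor attack $a_y=(a_{y1},\dots,a_{yn_y})^\top\in\mathbb{R}^{n_y}$ (attacks may be arbitrarily large), $f:\mathbb{R}^n\to\mathbb{R}^n$, $h:\mathbb{R}^n\to\mathbb{R}^{n_y}$, $B\in\mathbb{R}^{n\times n_u}$ of full column rank. The unknown set of attacked sensors is $W_y=\{i:a_{yi}(k)\ne0\text{ for some }k\ge0\}$, so $\supp(a_y(k))\subseteq W_y$ for all $k$ (it is time-invariant); similarly the attacked actuator set $W_u=\{i:a_{ui}(k)\ne0\text{ for some }k\ge0\}$ is time-invariant. For $J\subset\{1,\dots,n_y\}$, $y^J$, $a_y^J$ denote subvectors of components indexed by $J$. A complete UIO for $J_s$ is a system $\hat x_{J_s}(k+1)=f_{J_s}(\hat x_{J_s}(k),u(k),y^{J_s}(k),y^{J_s}(k+1))$ with $f_{J_s}:\mathbb{R}^n\times\mathbb{R}^{n_u}\times\mathbb{R}^{\card(J_s)}\times\mathbb{R}^{\card(J_s)}\to\mathbb{R}^n$ such that, with $e_{J_s}=\hat x_{J_s}-x$, there is a class-$\mathcal{KL}$ function $\beta_{J_s}$ with $|e_{J_s}(k)|\le\beta_{J_s}(|e_{J_s}(0)|,k)$ for all $k\ge0$, for all initial conditions $x(0),\hat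 x_{J_s}(0)\in\mathbb{R}^n$, all known inputs and all actuator attacks $a_u$, whenever $a_y^{J_s}(k)=0$ for all $k\ge0$. $|\cdot|$ is the Euclidean norm. *)

theory Defs
  imports "HOL-Analysis.Analysis"
begin

definition class_K :: "(real \<Rightarrow> real) \<Rightarrow> bool" where
  "class_K \<alpha> \<longleftrightarrow> continuous_on {0..} \<alpha> \<and> \<alpha> 0 = 0 \<and> strict_mono_on {0..} \<alpha>"

definition class_KL :: "(real \<Rightarrow> real \<Rightarrow> real) \<Rightarrow> bool" where
  "class_KL \<beta> \<longleftrightarrow>
     (\<forall>t\<ge>0. class_K (\<lambda>s. \<beta> s t)) \<and>
     (\<forall>s\<ge>0. antimono_on {0..} (\<lambda>t. \<beta> s t) \<and> ((\<lambda>t. \<beta> s t) \<longlongrightarrow> 0) at_top)"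

text \<open>Subvector y^J of y, represented by zeroing the components outside J
  (so a map fed with mask J y depends only on y^J).\<close>

definition mask :: "'ny set \<Rightarrow> real^'ny \<Rightarrow> real^'ny" where
  "mask J y = (\<chi> i. if i \<in> J then y $ i else 0)"

definition plant_traj ::
  "(real^'n \<Rightarrow> real^'n) \<Rightarrow> real^'nu^'n \<Rightarrow>
   (nat \<Rightarrow> real^'n) \<Rightarrow> (nat \<Rightarrow> real^'nu) \<Rightarrow> (nat \<Rightarrow> real^'nu) \<Rightarrow> bool" where
  "plant_traj f B x u au \<longleftrightarrow> (\<forall>k. x (Suc k) = f (x k) + B *v (u k + au k))"

definition obs_traj ::
  "(real^'n \<Rightarrow> real^'nu \<Rightarrow> real^'ny \<Rightarrow> real^'ny \<Rightarrow> real^'n) \<Rightarrow> 'ny set \<Rightarrow>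
   (nat \<Rightarrow> real^'nu) \<Rightarrow> (nat \<Rightarrow> real^'ny) \<Rightarrow> (nat \<Rightarrow> real^'n) \<Rightarrow> bool" where
  "obs_traj fJ J u y xh \<longleftrightarrow>
     (\<forall>k. xh (Suc k) = fJ (xh k) (u k) (mask J (y k)) (mask J (y (Suc k))))"

definition complete_UIO ::
  "(real^'n \<Rightarrow> real^'n) \<Rightarrow> real^'nu^'n \<Rightarrow> (real^'n \<Rightarrow> real^'ny) \<Rightarrow> 'ny set \<Rightarrow>
   (real^'n \<Rightarrow> real^'nu \<Rightarrow> real^'ny \<Rightarrow> real^'ny \<Rightarrow> real^'n) \<Rightarrow> bool" where
  "complete_UIO f B h J fJ \<longleftrightarrow>
     (\<exists>\<beta>. class_KL \<beta> \<and>
        (\<forall>x u au ay xh.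
           plant_traj f B x u au \<longrightarrow>
           (\<forall>k. \<forall>i\<in>J. ay k $ i = 0) \<longrightarrow>
           obs_traj fJ J u (\<lambda>k. h (x k) + ay k) xh \<longrightarrow>
           (\<forall>k. norm (xh k - x k) \<le> \<beta> (norm (xh 0 - x 0)) (real k))))"

definition UIO_exists ::
  "(real^'n \<Rightarrow> real^'n) \<Rightarrow> real^'nu^'n \<Rightarrow> (real^'n \<Rightarrow> real^'ny) \<Rightarrow> 'ny set \<Rightarrow> bool" where
  "UIO_exists f B h J \<longleftrightarrow> (\<exists>fJ. complete_UIO f B h J fJ)"

definition UIO_redundancy ::
  "(real^'n \<Rightarrow> real^'n) \<Rightarrow> real^'nu^'n \<Rightarrow> (real^'n \<Rightarrow> real^'ny) \<Rightarrow> nat \<Rightarrow> bool" where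
  "UIO_redundancy f B h q \<longleftrightarrow>
     (\<forall>J::'ny set. int (card J) \<ge> int CARD('ny) - 2 * int q \<and> int CARD('ny) - 2 * int q > 0
        \<longrightarrow> UIO_exists f B h J)"

definition pi_fun :: "nat \<Rightarrow> ('ny::finite set \<Rightarrow> nat \<Rightarrow> real^'n) \<Rightarrow> 'ny set \<Rightarrow> nat \<Rightarrow> real" where
  "pi_fun q xh J k =
     Max {norm (xh J k - xh S k) | S. S \<subseteq> J \<and> card S = CARD('ny) - 2 * q}"

end

theory Submission
  imports Defs
begin

text \<open>At least \<open>n\<^sub>y - q\<close> sensors are never attacked, so some \<open>J\<^sub>s\<close> of size \<open>n\<^sub>y - q\<close> is
  attack-free. Its observer and the observers of all its subsets of size \<open>n\<^sub>y - 2q\<close> then have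
  errors below a common bound \<open>r\<close>, so \<open>\<pi>\<^sub>J\<^sub>s \<le> 2r\<close>. Two sets of size \<open>n\<^sub>y - q\<close> share at least
  \<open>n\<^sub>y - 2q\<close> sensors, so the selected set \<open>\<sigma>\<close> contains an attack-free \<open>S\<^sub>s\<close> of size \<open>n\<^sub>y - 2q\<close>,
  and \<open>|e| \<le> |x\<^sub>\<sigma> - x\<^sub>S\<^sub>s| + |e\<^sub>S\<^sub>s| \<le> \<pi>\<^sub>\<sigma> + r \<le> \<pi>\<^sub>J\<^sub>s + r \<le> 3r\<close>. Taking for \<open>r\<close> the sum of the
  class-KL bounds of all observers, evaluated at \<open>e\<^sub>0\<close>, gives the class-KL bound.\<close>

lemma class_K_nonneg: "class_K \<alpha> \<Longrightarrow> 0 \<le> s \<Longrightarrow> 0 \<le> \<alpha> s"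
  unfolding class_K_def strict_mono_on_def
  by (metis atLeast_iff less_eq_real_def order_refl)

lemma class_K_mono: "class_K \<alpha> \<Longrightarrow> 0 \<le> s \<Longrightarrow> s \<le> s' \<Longrightarrow> \<alpha> s \<le> \<alpha> s'"
  unfolding class_K_def strict_mono_on_def
  by (metis atLeast_iff less_eq_real_def order_trans)

lemma class_KL_le_sum:
  assumes "finite F" "J \<in> F" "\<And>J. J \<in> F \<Longrightarrow> class_KL (\<beta> J)"
    and "0 \<le> s" "s \<le> s'" "0 \<le> t"
  shows "\<beta> J s t \<le> (\<Sum>J\<in>F. \<beta> J s' t)"
proof -
  have K: "class_K (\<lambda>s. \<beta> J s t)" if "J \<in> F" for J
    using assms(3)[OF that] \<open>0 \<le> t\<close> unfolding class_KL_def by blast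
  have "\<beta> J s t \<le> \<beta> J s' t"
    using class_K_mono[OF K[OF \<open>J \<in> F\<close>]] assms(4,5) .
  also have "\<dots> \<le> (\<Sum>J\<in>F. \<beta> J s' t)"
    using assms(1,2,4,5) by (intro member_le_sum class_K_nonneg[OF K]) auto
  finally show ?thesis .
qed

lemma class_KL_sum:
  assumes "finite F" "F \<noteq> {}" and KL: "\<And>J. J \<in> F \<Longrightarrow> class_KL (\<beta> J)"
  shows "class_KL (\<lambda>s t. \<Sum>J\<in>F. \<beta> J s t)"
  unfolding class_KL_def
proof (intro conjI allI impI)
  fix t :: real assume "0 \<le> t"
  then have K: "class_K (\<lambda>s. \<beta> J s t)" if "J \<in> F" for J
    using KL[OF that] unfolding class_KL_def by blast
  show "class_K (\<lambda>s. \<Sum>J\<in>F. \<beta> J s t)"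
    unfolding class_K_def
  proof (intro conjI)
    show "continuous_on {0..} (\<lambda>s. \<Sum>J\<in>F. \<beta> J s t)"
      using K unfolding class_K_def by (intro continuous_intros) auto
    show "(\<Sum>J\<in>F. \<beta> J 0 t) = 0"
      using K unfolding class_K_def by simp
    show "strict_mono_on {0..} (\<lambda>s. \<Sum>J\<in>F. \<beta> J s t)"
      using K assms(1,2) unfolding strict_mono_on_def class_K_def
      by (auto intro!: sum_strict_mono)
  qed
next
  fix s :: real assume "0 \<le> s"
  then have L: "antimono_on {0..} (\<lambda>t. \<beta> J s t) \<and> ((\<lambda>t. \<beta> J s t) \<longlongrightarrow> 0) at_top"
    if "J \<in> F" for J
    using KL[OF that] unfolding class_KL_def by blast
  show "antimono_on {0..} (\<lambda>t. \<Sum>J\<in>F. \<beta> J s t)"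
    using L unfolding monotone_on_def by (auto intro!: sum_mono)
  show "((\<lambda>t. \<Sum>J\<in>F. \<beta> J s t) \<longlongrightarrow> 0) at_top"
    using L by (intro tendsto_null_sum) auto
qed

lemma class_KL_scale:
  assumes KL: "class_KL \<beta>" and "0 < c"
  shows "class_KL (\<lambda>s t. c * \<beta> s t)"
  unfolding class_KL_def
proof (intro conjI allI impI)
  fix t :: real assume "0 \<le> t"
  then have "class_K (\<lambda>s. \<beta> s t)"
    using KL unfolding class_KL_def by blast
  then show "class_K (\<lambda>s. c * \<beta> s t)"
    using \<open>0 < c\<close> unfolding class_K_def strict_mono_on_def
    by (auto intro!: continuous_intros)
next
  fix s :: real assume "0 \<le> s"
  then have "antimono_on {0..} (\<lambda>t. \<beta> s t)" "((\<lambda>t. \<beta> s t) \<longlongrightarrow> 0) at_top"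
    using KL unfolding class_KL_def by blast+
  then show "antimono_on {0..} (\<lambda>t. c * \<beta> s t)" "((\<lambda>t. c * \<beta> s t) \<longlongrightarrow> 0) at_top"
    using \<open>0 < c\<close> unfolding monotone_on_def
    by (auto intro: tendsto_mult_right_zero)
qed

lemma card_Int_ge: "card A + card B \<le> card (A \<inter> B) + CARD('a)"
  for A B :: "'a::finite set"
proof -
  have "card A + card B = card (A \<union> B) + card (A \<inter> B)"
    by (rule card_Un_Int) auto
  moreover have "card (A \<union> B) \<le> CARD('a)"
    by (rule card_mono) auto
  ultimately show ?thesis by linarith
qed

lemma norm_diff_le_pi_fun:
  "S \<subseteq> J \<Longrightarrow> card S = CARD('ny) - 2 * q \<Longrightarrow> norm (xh J k - xh S k) \<le> pi_fun q xh J k"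
  for J :: "'ny::finite set"
  unfolding pi_fun_def by (intro Max_ge) auto

lemma pi_fun_le:
  fixes J :: "'ny::finite set"
  assumes "CARD('ny) - 2 * q \<le> card J"
    and "\<And>S. S \<subseteq> J \<Longrightarrow> card S = CARD('ny) - 2 * q \<Longrightarrow> norm (xh J k - xh S k) \<le> c"
  shows "pi_fun q xh J k \<le> c"
proof -
  obtain S0 where "S0 \<subseteq> J" "card S0 = CARD('ny) - 2 * q"
    using obtain_subset_with_card_n[OF assms(1)] by metis
  then show ?thesis
    unfolding pi_fun_def using assms(2) by (subst Max_le_iff) auto
qed

lemma selected_observer_error_le:
  fixes xh :: "'ny::finite set \<Rightarrow> nat \<Rightarrow> real^'n" and W \<sigma> :: "'ny set"
  assumes "card W \<le> q" "2 * q < CARD('ny)"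
    and \<sigma>: "card \<sigma> = CARD('ny) - q"
      "\<And>J. card J = CARD('ny) - q \<Longrightarrow> pi_fun q xh \<sigma> k \<le> pi_fun q xh J k"
    and r: "\<And>J. J \<inter> W = {} \<Longrightarrow> card J = CARD('ny) - q \<or> card J = CARD('ny) - 2 * q \<Longrightarrow>
              norm (xh J k - x) \<le> r"
  shows "norm (xh \<sigma> k - x) \<le> 3 * r"
proof -
  have "CARD('ny) - q \<le> card (- W)"
    using assms(1) card_Diff_subset[of W UNIV] by (simp add: Compl_eq_Diff_UNIV)
  then obtain J where J: "J \<subseteq> - W" "card J = CARD('ny) - q"
    using obtain_subset_with_card_n by metis
  have J_free: "J \<inter> W = {}"
    using J(1) by blast
  have "pi_fun q xh J k \<le> 2 * r"
  proof (rule pi_fun_le)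
    fix S assume S: "S \<subseteq> J" "card S = CARD('ny) - 2 * q"
    have "S \<inter> W = {}"
      using S(1) J_free by blast
    then have "norm (xh S k - x) \<le> r"
      using r S(2) by simp
    moreover have "norm (xh J k - x) \<le> r"
      using r J_free J(2) by simp
    moreover have "norm (xh J k - xh S k) \<le> norm (xh J k - x) + norm (xh S k - x)"
      using norm_triangle_ineq4[of "xh J k - x" "xh S k - x"] by simp
    ultimately show "norm (xh J k - xh S k) \<le> 2 * r"
      by linarith
  qed (use J in simp)
  have "CARD('ny) - 2 * q \<le> card (\<sigma> \<inter> J)"
    using card_Int_ge[of \<sigma> J] \<sigma>(1) J(2) assms(2) by linarith
  then obtain S where S: "S \<subseteq> \<sigma> \<inter> J" "card S = CARD('ny) - 2 * q"
    using obtain_subset_with_card_n by metis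
  have "S \<inter> W = {}"
    using S(1) J_free by blast
  have "norm (xh \<sigma> k - x) \<le> norm (xh \<sigma> k - xh S k) + norm (xh S k - x)"
    using norm_triangle_ineq[of "xh \<sigma> k - xh S k" "xh S k - x"] by simp
  also have "norm (xh \<sigma> k - xh S k) \<le> pi_fun q xh \<sigma> k"
    using S by (intro norm_diff_le_pi_fun) auto
  also have "\<dots> \<le> pi_fun q xh J k"
    using \<sigma>(2) J(2) by blast
  also have "norm (xh S k - x) \<le> r"
    using r \<open>S \<inter> W = {}\<close> S(2) by simp
  finally show ?thesis
    using \<open>pi_fun q xh J k \<le> 2 * r\<close> by linarith
qed

lemma complete_UIO_choice:
  assumes "\<forall>J\<in>F. complete_UIO f B h J (obs J)"
  obtains \<beta> where "\<And>J. J \<in> F \<Longrightarrow> class_KL (\<beta> J)"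
    and "\<And>J x u au ay xh k. J \<in> F \<Longrightarrow> plant_traj f B x u au \<Longrightarrow> (\<forall>k. \<forall>i\<in>J. ay k $ i = 0) \<Longrightarrow>
           obs_traj (obs J) J u (\<lambda>k. h (x k) + ay k) xh \<Longrightarrow>
           norm (xh k - x k) \<le> \<beta> J (norm (xh 0 - x 0)) (real k)"
proof -
  from assms obtain \<beta> where "\<forall>J\<in>F. class_KL (\<beta> J) \<and>
        (\<forall>x u au ay xh. plant_traj f B x u au \<longrightarrow> (\<forall>k. \<forall>i\<in>J. ay k $ i = 0) \<longrightarrow>
           obs_traj (obs J) J u (\<lambda>k. h (x k) + ay k) xh \<longrightarrow>
           (\<forall>k. norm (xh k - x k) \<le> \<beta> J (norm (xh 0 - x 0)) (real k)))"
    unfolding complete_UIO_def by (rule bchoice[THEN exE])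
  then show ?thesis
    by (intro that) blast+
qed

theorem theorem1:
  fixes f :: "real^'n \<Rightarrow> real^'n"
    and h :: "real^'n \<Rightarrow> real^'ny::finite"
    and B :: "real^'nu^'n"
    and q :: nat
    and obs :: "'ny set \<Rightarrow> (real^'n \<Rightarrow> real^'nu \<Rightarrow> real^'ny \<Rightarrow> real^'ny \<Rightarrow> real^'n)"
  assumes B_rank: "rank B = CARD('nu)"
    and q_lt: "2 * q < CARD('ny)"
    and q_prop: "UIO_redundancy f B h q"
    and q_max: "\<forall>q'. 2 * q' < CARD('ny) \<and> UIO_redundancy f B h q' \<longrightarrow> q' \<le> q"
    and obs_J: "\<forall>J::'ny set. card J = CARD('ny) - q \<longrightarrow> complete_UIO f B h J (obs J)"
    and obs_S: "\<forall>S::'ny set. card S = CARD('ny) - 2 * q \<longrightarrow> complete_UIO f B h S (obs S)"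
  shows "\<exists>\<beta>. class_KL \<beta> \<and>
    (\<forall>x u au ay xh \<sigma>.
       plant_traj f B x u au \<longrightarrow>
       card {i. \<exists>k. ay k $ i \<noteq> 0} \<le> q \<longrightarrow>
       (\<forall>J. card J = CARD('ny) - q \<or> card J = CARD('ny) - 2 * q \<longrightarrow>
            obs_traj (obs J) J u (\<lambda>k. h (x k) + ay k) (xh J)) \<longrightarrow>
       (\<forall>k. card (\<sigma> k) = CARD('ny) - q \<and>
            (\<forall>J. card J = CARD('ny) - q \<longrightarrow> pi_fun q xh (\<sigma> k) k \<le> pi_fun q xh J k)) \<longrightarrow>
       (\<forall>k. norm (xh (\<sigma> k) k - x k) \<le>
              \<beta> (Max ({norm (xh J 0 - x 0) | J. card J = CARD('ny) - q} \<union>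
                       {norm (xh S 0 - x 0) | S. card S = CARD('ny) - 2 * q}))
                (real k)))"
proof -
  define F where "F = {J::'ny set. card J = CARD('ny) - q \<or> card J = CARD('ny) - 2 * q}"
  obtain \<beta> where KL: "\<And>J. J \<in> F \<Longrightarrow> class_KL (\<beta> J)"
    and err: "\<And>J x u au ay xh k. J \<in> F \<Longrightarrow> plant_traj f B x u au \<Longrightarrow>
           (\<forall>k. \<forall>i\<in>J. ay k $ i = 0) \<Longrightarrow> obs_traj (obs J) J u (\<lambda>k. h (x k) + ay k) xh \<Longrightarrow>
           norm (xh k - x k) \<le> \<beta> J (norm (xh 0 - x 0)) (real k)"
    using complete_UIO_choice[of F f B h obs] obs_J obs_S unfolding F_def by blast
  have "F \<noteq> {}"
    using obtain_subset_with_card_n[of "CARD('ny) - q" "UNIV :: 'ny set"] unfolding F_def by auto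
  then have "class_KL (\<lambda>s t. 3 * (\<Sum>J\<in>F. \<beta> J s t))"
    using KL by (intro class_KL_scale class_KL_sum) auto
  moreover
  {
    fix x u au ay xh \<sigma> k
    assume plant: "plant_traj f B x u au"
      and attacks: "card {i. \<exists>k. ay k $ i \<noteq> 0} \<le> q"
      and observers: "\<forall>J. card J = CARD('ny) - q \<or> card J = CARD('ny) - 2 * q \<longrightarrow>
            obs_traj (obs J) J u (\<lambda>k. h (x k) + ay k) (xh J)"
      and \<sigma>: "\<forall>k. card (\<sigma> k) = CARD('ny) - q \<and>
            (\<forall>J. card J = CARD('ny) - q \<longrightarrow> pi_fun q xh (\<sigma> k) k \<le> pi_fun q xh J k)"
    define e0 where "e0 = Max ({norm (xh J 0 - x 0) | J. card J = CARD('ny) - q} \<union>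
                       {norm (xh S 0 - x 0) | S. card S = CARD('ny) - 2 * q})"
    have e0: "norm (xh J 0 - x 0) \<le> e0" if "J \<in> F" for J
      unfolding e0_def using that F_def by (intro Max_ge) auto
    have "norm (xh J k - x k) \<le> (\<Sum>J\<in>F. \<beta> J e0 (real k))"
      if "J \<inter> {i. \<exists>k. ay k $ i \<noteq> 0} = {}" "card J = CARD('ny) - q \<or> card J = CARD('ny) - 2 * q"
      for J
    proof -
      have "J \<in> F"
        using that(2) unfolding F_def by blast
      have "norm (xh J k - x k) \<le> \<beta> J (norm (xh J 0 - x 0)) (real k)"
        using err[OF \<open>J \<in> F\<close> plant _ observers[rule_format, OF that(2)]] that(1) by blast
      also have "\<dots> \<le> (\<Sum>J\<in>F. \<beta> J e0 (real k))"
        using KL e0[OF \<open>J \<in> F\<close>] \<open>J \<in> F\<close> by (intro class_KL_le_sum) (auto simp: F_def)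
      finally show ?thesis .
    qed
    then have "norm (xh (\<sigma> k) k - x k) \<le> 3 * (\<Sum>J\<in>F. \<beta> J e0 (real k))"
      using \<sigma> q_lt attacks by (intro selected_observer_error_le) auto
  }
  ultimately show ?thesis
    by blast
qed

end
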